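(* Let $K$ be a flag simplicial complex with a hereditary ordering $\succ$, and let $r$ be a positive integer. Suppose that for any two simplices $\sigma,\tau\in K$ with $\dim\sigma=\dim\tau=r$ and $\mu(\sigma)=\mu(\tau)$ we have $\sigma\cup\tau\in K$. Then for any two simplices $\sigma,\tau\in K$ with $\dim\sigma=\dim\tau>r$ and $\mu(\sigma)=\mu(\tau)$ we also have $\sigma\cup\tau\in K$.
   Context: $K$ is a finite simplicial complex (family of subsets of a finite vertex set containing $\emptyset$, closed under subsets); $\dim\sigma=|\sigma|-1$. $K$ is flag if whenever vertices $v_0,\dots,v_q$ are pairwise joined by edges of $K$, $\{v_0,\dots,v_q\}\in K$. For a strict total ordering $\succ$ of $K$ and non-empty $\sigma$, $\mu(\sigma)$ is the $\succ$-largest facet (codimension-one face) of $\sigma$; $\succ$ is hereditary if $\sigma\succ\tau$ whenever $\dim\sigma>\dim\tau$, and $\sigma\succ\tau$ whenever $\mu(\sigma)\succ\mu(\tau)$. *)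

theory Defs
  imports Main
begin

definition simplicial_complex :: "'a set set \<Rightarrow> bool" where
  "simplicial_complex K \<longleftrightarrow> finite K \<and> {} \<in> K \<and> (\<forall>\<sigma>\<in>K. finite \<sigma>) \<and>
     (\<forall>\<sigma>\<in>K. \<forall>\<tau>. \<tau> \<subseteq> \<sigma> \<longrightarrow> \<tau> \<in> K)"

definition sdim :: "'a set \<Rightarrow> int" where
  "sdim \<sigma> = int (card \<sigma>) - 1"

definition vertices :: "'a set set \<Rightarrow> 'a set" where
  "vertices K = \<Union>K"

definition flag :: "'a set set \<Rightarrow> bool" where
  "flag K \<longleftrightarrow> (\<forall>S. finite S \<and> S \<noteq> {} \<and> S \<subseteq> vertices K \<and>
      (\<forall>v\<in>S. \<forall>w\<in>S. v \<noteq> w \<longrightarrow> {v, w} \<in> K) \<longrightarrow> S \<in> K)"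

definition strict_total_order_on :: "'a set set \<Rightarrow> ('a set \<Rightarrow> 'a set \<Rightarrow> bool) \<Rightarrow> bool" where
  "strict_total_order_on K gt \<longleftrightarrow>
     (\<forall>\<sigma>\<in>K. \<not> gt \<sigma> \<sigma>) \<and>
     (\<forall>\<sigma>\<in>K. \<forall>\<tau>\<in>K. \<forall>\<rho>\<in>K. gt \<sigma> \<tau> \<longrightarrow> gt \<tau> \<rho> \<longrightarrow> gt \<sigma> \<rho>) \<and>
     (\<forall>\<sigma>\<in>K. \<forall>\<tau>\<in>K. \<sigma> \<noteq> \<tau> \<longrightarrow> gt \<sigma> \<tau> \<or> gt \<tau> \<sigma>)"

definition facets :: "'a set \<Rightarrow> 'a set set" where
  "facets \<sigma> = {\<sigma> - {v} | v. v \<in> \<sigma>}"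

definition mu :: "('a set \<Rightarrow> 'a set \<Rightarrow> bool) \<Rightarrow> 'a set \<Rightarrow> 'a set" where
  "mu gt \<sigma> = (THE \<tau>. \<tau> \<in> facets \<sigma> \<and> (\<forall>\<tau>'\<in>facets \<sigma>. \<tau>' \<noteq> \<tau> \<longrightarrow> gt \<tau> \<tau>'))"

definition hereditary :: "'a set set \<Rightarrow> ('a set \<Rightarrow> 'a set \<Rightarrow> bool) \<Rightarrow> bool" where
  "hereditary K gt \<longleftrightarrow> strict_total_order_on K gt \<and>
     (\<forall>\<sigma>\<in>K. \<forall>\<tau>\<in>K. sdim \<sigma> > sdim \<tau> \<longrightarrow> gt \<sigma> \<tau>) \<and>
     (\<forall>\<sigma>\<in>K. \<forall>\<tau>\<in>K. \<sigma> \<noteq> {} \<longrightarrow> \<tau> \<noteq> {} \<longrightarrow> gt (mu gt \<sigma>) (mu gt \<tau>) \<longrightarrow> gt \<sigma> \<tau>)"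

end

theory Submission
  imports Defs
begin

text \<open>Let \<sigma> = \<rho> + a and \<tau> = \<rho> + b with \<mu>(\<sigma>) = \<mu>(\<tau>) = \<rho>,
  and \<mu>(\<rho>) = \<rho> - c. Heredity forces \<mu>(\<rho> - c + a) = \<rho> - c: a larger facet \<rho> - c - x + a would
  make \<mu>(\<sigma> - x) \<succ> \<mu>(\<rho>), hence \<sigma> - x \<succ> \<rho> = \<mu>(\<sigma>). So \<rho> - c + a and \<rho> - c + b are simplices
  one dimension lower with the same \<mu>, their union lies in K by induction, and in particular
  {a, b} is an edge. Every pair of vertices of \<sigma> \<union> \<tau> is then an edge, and flagness gives
  \<sigma> \<union> \<tau> \<in> K.\<close>

lemma simplicial_complex_downward_closed:
  "simplicial_complex K \<Longrightarrow> \<sigma> \<in> K \<Longrightarrow> \<tau> \<subseteq> \<sigma> \<Longrightarrow> \<tau> \<in> K"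
  unfolding simplicial_complex_def by blast

lemma simplicial_complex_finite_simplex:
  "simplicial_complex K \<Longrightarrow> \<sigma> \<in> K \<Longrightarrow> finite \<sigma>"
  unfolding simplicial_complex_def by blast

lemma strict_total_order_on_asym:
  "strict_total_order_on K gt \<Longrightarrow> x \<in> K \<Longrightarrow> y \<in> K \<Longrightarrow> gt x y \<Longrightarrow> \<not> gt y x"
  unfolding strict_total_order_on_def by blast

lemma strict_total_order_on_trans:
  "strict_total_order_on K gt \<Longrightarrow> x \<in> K \<Longrightarrow> y \<in> K \<Longrightarrow> z \<in> K \<Longrightarrow> gt x y \<Longrightarrow> gt y z \<Longrightarrow> gt x z"
  unfolding strict_total_order_on_def by blast

lemma strict_total_order_on_total:
  "strict_total_order_on K gt \<Longrightarrow> x \<in> K \<Longrightarrow> y \<in> K \<Longrightarrow> x \<noteq> y \<Longrightarrow> gt x y \<or> gt y x"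
  unfolding strict_total_order_on_def by blast

lemma strict_total_order_on_greatest:
  assumes ord: "strict_total_order_on K gt" and "finite F" "F \<noteq> {}" "F \<subseteq> K"
  shows "\<exists>m\<in>F. \<forall>y\<in>F. y \<noteq> m \<longrightarrow> gt m y"
  using assms(2-4)
proof (induction F rule: finite_ne_induct)
  case (singleton x)
  then show ?case by simp
next
  case (insert x F)
  then obtain m where m: "m \<in> F" "\<forall>y\<in>F. y \<noteq> m \<longrightarrow> gt m y"
    by blast
  have K: "x \<in> K" "m \<in> K" "F \<subseteq> K"
    using insert.prems m(1) by auto
  show ?case
  proof (cases "gt x m")
    case True
    then have "\<forall>y\<in>F. y \<noteq> x \<longrightarrow> gt x y"
      using m K strict_total_order_on_trans[OF ord] by (metis subsetD)
    then show ?thesis by blast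
  next
    case False
    then have "x \<noteq> m \<longrightarrow> gt m x"
      using strict_total_order_on_total[OF ord K(1,2)] by blast
    then show ?thesis using m by blast
  qed
qed

lemma hereditary_strict_total_order_on:
  "hereditary K gt \<Longrightarrow> strict_total_order_on K gt"
  unfolding hereditary_def by blast

lemma hereditary_mu_less:
  "hereditary K gt \<Longrightarrow> \<sigma> \<in> K \<Longrightarrow> \<tau> \<in> K \<Longrightarrow> \<sigma> \<noteq> {} \<Longrightarrow> \<tau> \<noteq> {} \<Longrightarrow>
    gt (mu gt \<sigma>) (mu gt \<tau>) \<Longrightarrow> gt \<sigma> \<tau>"
  unfolding hereditary_def by blast

lemma facets_eq_image: "facets \<sigma> = (\<lambda>v. \<sigma> - {v}) ` \<sigma>"
  unfolding facets_def by blast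

lemma mu_greatest:
  assumes sc: "simplicial_complex K" and ord: "strict_total_order_on K gt"
    and \<sigma>: "\<sigma> \<in> K" "\<sigma> \<noteq> {}"
  shows mu_in_facets: "mu gt \<sigma> \<in> facets \<sigma>"
    and mu_gt_facet: "\<tau> \<in> facets \<sigma> \<Longrightarrow> \<tau> \<noteq> mu gt \<sigma> \<Longrightarrow> gt (mu gt \<sigma>) \<tau>"
proof -
  let ?greatest = "\<lambda>m. m \<in> facets \<sigma> \<and> (\<forall>\<tau>\<in>facets \<sigma>. \<tau> \<noteq> m \<longrightarrow> gt m \<tau>)"
  have facets_in_K: "facets \<sigma> \<subseteq> K"
    unfolding facets_eq_image using simplicial_complex_downward_closed[OF sc \<sigma>(1)] by blast
  have "finite (facets \<sigma>)" "facets \<sigma> \<noteq> {}"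
    unfolding facets_eq_image using simplicial_complex_finite_simplex[OF sc \<sigma>(1)] \<sigma>(2) by auto
  then obtain m where m: "?greatest m"
    using strict_total_order_on_greatest[OF ord _ _ facets_in_K] by blast
  have "m' = m" if m': "?greatest m'" for m'
  proof (rule ccontr)
    assume "m' \<noteq> m"
    then have "gt m m'" "gt m' m"
      using m m' by auto
    moreover have "m \<in> K" "m' \<in> K"
      using m m' facets_in_K by auto
    ultimately show False
      using strict_total_order_on_asym[OF ord] by blast
  qed
  then have "?greatest (mu gt \<sigma>)"
    unfolding mu_def by (rule theI[where P = ?greatest, OF m])
  then show "mu gt \<sigma> \<in> facets \<sigma>" "\<tau> \<in> facets \<sigma> \<Longrightarrow> \<tau> \<noteq> mu gt \<sigma> \<Longrightarrow> gt (mu gt \<sigma>) \<tau>"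
    by auto
qed

lemma mu_eq_Diff:
  assumes "simplicial_complex K" "strict_total_order_on K gt" "\<sigma> \<in> K" "\<sigma> \<noteq> {}"
  obtains a where "a \<in> \<sigma>" "mu gt \<sigma> = \<sigma> - {a}"
  using mu_in_facets[OF assms] unfolding facets_eq_image by blast

lemma mu_gt_if_facet_gt:
  assumes sc: "simplicial_complex K" and ord: "strict_total_order_on K gt"
    and \<sigma>: "\<sigma> \<in> K" "\<sigma> \<noteq> {}" and \<tau>: "\<tau> \<in> facets \<sigma>" and "gt \<tau> \<upsilon>" "\<upsilon> \<in> K"
  shows "gt (mu gt \<sigma>) \<upsilon>"
proof (cases "\<tau> = mu gt \<sigma>")
  case False
  have "\<tau> \<in> K" "mu gt \<sigma> \<in> K"
    using \<tau> mu_in_facets[OF sc ord \<sigma>] simplicial_complex_downward_closed[OF sc \<sigma>(1)]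
    unfolding facets_eq_image by auto
  then show ?thesis
    using strict_total_order_on_trans[OF ord _ _ assms(7) mu_gt_facet[OF sc ord \<sigma> \<tau> False] assms(6)]
    by blast
qed (use assms(6) in simp)

lemma hereditary_facet_not_gt:
  assumes sc: "simplicial_complex K" and h: "hereditary K gt"
    and \<sigma>: "insert a \<rho> \<in> K" and a: "a \<notin> \<rho>" and \<mu>\<sigma>: "mu gt (insert a \<rho>) = \<rho>"
    and c: "c \<in> \<rho>" "mu gt \<rho> = \<rho> - {c}" and x: "x \<in> \<rho>" "x \<noteq> c"
  shows "\<not> gt (insert a (\<rho> - {c, x})) (\<rho> - {c})"
proof
  note ord = hereditary_strict_total_order_on[OF h]
  note face = simplicial_complex_downward_closed[OF sc \<sigma>]
  assume gt: "gt (insert a (\<rho> - {c, x})) (\<rho> - {c})"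
  define \<psi> where "\<psi> = insert a \<rho> - {x}"
  have \<rho>K: "\<rho> \<in> K" "\<rho> \<noteq> {}"
    using face c(1) by auto
  have "a \<noteq> x"
    using a x(1) by blast
  then have \<psi>K: "\<psi> \<in> K" "\<psi> \<noteq> {}"
    unfolding \<psi>_def using face by auto
  have "\<psi> \<in> facets (insert a \<rho>)"
    unfolding \<psi>_def facets_eq_image using x(1) by blast
  moreover have "\<psi> \<noteq> \<rho>"
    unfolding \<psi>_def using a x(1) by blast
  ultimately have "gt \<rho> \<psi>"
    using mu_gt_facet[OF sc ord \<sigma> insert_not_empty] \<mu>\<sigma> by simp
  have "c \<in> \<psi>"
    unfolding \<psi>_def using c(1) x(2) by blast
  then have "\<psi> - {c} \<in> facets \<psi>"
    unfolding facets_eq_image by blast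
  moreover have "\<psi> - {c} = insert a (\<rho> - {c, x})"
    unfolding \<psi>_def using a c(1) \<open>a \<noteq> x\<close> by auto
  moreover have "\<rho> - {c} \<in> K"
    by (rule face) blast
  ultimately have "gt (mu gt \<psi>) (mu gt \<rho>)"
    using mu_gt_if_facet_gt[OF sc ord \<psi>K] gt c(2) by simp
  then have "gt \<psi> \<rho>"
    using hereditary_mu_less[OF h \<psi>K(1) \<rho>K(1) \<psi>K(2) \<rho>K(2)] by simp
  then show False
    using \<open>gt \<rho> \<psi>\<close> strict_total_order_on_asym[OF ord \<psi>K(1) \<rho>K(1)] by blast
qed

lemma mu_insert_mu:
  assumes sc: "simplicial_complex K" and h: "hereditary K gt"
    and \<sigma>: "insert a \<rho> \<in> K" and a: "a \<notin> \<rho>" and \<mu>\<sigma>: "mu gt (insert a \<rho>) = \<rho>"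
    and \<rho>: "\<rho> \<noteq> {}"
  shows "mu gt (insert a (mu gt \<rho>)) = mu gt \<rho>"
proof -
  note ord = hereditary_strict_total_order_on[OF h]
  have "\<rho> \<in> K"
    by (rule simplicial_complex_downward_closed[OF sc \<sigma>]) blast
  obtain c where c: "c \<in> \<rho>" "mu gt \<rho> = \<rho> - {c}"
    using mu_eq_Diff[OF sc ord \<open>\<rho> \<in> K\<close> \<rho>] .
  define \<sigma>' where "\<sigma>' = insert a (\<rho> - {c})"
  have \<sigma>'K: "\<sigma>' \<in> K"
    unfolding \<sigma>'_def by (rule simplicial_complex_downward_closed[OF sc \<sigma>]) blast
  obtain x where x: "x \<in> \<sigma>'" "mu gt \<sigma>' = \<sigma>' - {x}"
    using mu_eq_Diff[OF sc ord \<sigma>'K] unfolding \<sigma>'_def by blast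
  have "x = a"
  proof (rule ccontr)
    assume "x \<noteq> a"
    then have x\<rho>: "x \<in> \<rho>" "x \<noteq> c"
      using x(1) unfolding \<sigma>'_def by auto
    have "a \<in> \<sigma>'"
      unfolding \<sigma>'_def by simp
    then have "\<sigma>' - {a} \<in> facets \<sigma>'"
      unfolding facets_eq_image by (rule imageI)
    moreover have "\<sigma>' - {a} = \<rho> - {c}"
      unfolding \<sigma>'_def using a by auto
    moreover have "\<rho> - {c} \<noteq> \<sigma>' - {x}"
      using \<open>a \<in> \<sigma>'\<close> \<open>x \<noteq> a\<close> a by auto
    ultimately have "gt (\<sigma>' - {x}) (\<rho> - {c})"
      using mu_gt_facet[OF sc ord \<sigma>'K] x(2) by auto
    moreover have "\<sigma>' - {x} = insert a (\<rho> - {c, x})"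
      unfolding \<sigma>'_def using \<open>x \<noteq> a\<close> by auto
    ultimately show False
      using hereditary_facet_not_gt[OF sc h \<sigma> a \<mu>\<sigma> c x\<rho>] by simp
  qed
  then show ?thesis
    using x(2) c(2) a unfolding \<sigma>'_def by auto
qed

lemma flagD:
  assumes "flag K" "finite S" "S \<noteq> {}" "S \<subseteq> vertices K"
    and "\<And>v w. v \<in> S \<Longrightarrow> w \<in> S \<Longrightarrow> {v, w} \<in> K"
  shows "S \<in> K"
  using assms unfolding flag_def by blast

lemma flag_union_insert:
  assumes sc: "simplicial_complex K" and fl: "flag K"
    and \<sigma>: "insert a \<rho> \<in> K" and \<tau>: "insert b \<rho> \<in> K" and edge: "{a, b} \<in> K"
  shows "insert a \<rho> \<union> insert b \<rho> \<in> K"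
proof (rule flagD[OF fl])
  show "finite (insert a \<rho> \<union> insert b \<rho>)"
    using simplicial_complex_finite_simplex[OF sc \<sigma>] by simp
  show "insert a \<rho> \<union> insert b \<rho> \<noteq> {}"
    by simp
  show "insert a \<rho> \<union> insert b \<rho> \<subseteq> vertices K"
    unfolding vertices_def using \<sigma> \<tau> by blast
  fix v w assume "v \<in> insert a \<rho> \<union> insert b \<rho>" "w \<in> insert a \<rho> \<union> insert b \<rho>"
  then consider "{v, w} \<subseteq> insert a \<rho>" | "{v, w} \<subseteq> insert b \<rho>" | "{v, w} = {a, b}"
    by blast
  then show "{v, w} \<in> K"
    using simplicial_complex_downward_closed[OF sc \<sigma>] simplicial_complex_downward_closed[OF sc \<tau>] edge
    by cases auto
qed

text \<open>Indexed by the number of vertices n, i.e. dimension n - 1.\<close>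

definition mu_union_closed :: "'a set set \<Rightarrow> ('a set \<Rightarrow> 'a set \<Rightarrow> bool) \<Rightarrow> nat \<Rightarrow> bool" where
  "mu_union_closed K gt n \<longleftrightarrow>
     (\<forall>\<sigma>\<in>K. \<forall>\<tau>\<in>K. card \<sigma> = n \<and> card \<tau> = n \<and> mu gt \<sigma> = mu gt \<tau> \<longrightarrow> \<sigma> \<union> \<tau> \<in> K)"

lemma edge_if_mu_union_closed:
  assumes sc: "simplicial_complex K" and h: "hereditary K gt"
    and \<sigma>: "insert a \<rho> \<in> K" "a \<notin> \<rho>" "mu gt (insert a \<rho>) = \<rho>"
    and \<tau>: "insert b \<rho> \<in> K" "b \<notin> \<rho>" "mu gt (insert b \<rho>) = \<rho>"
    and \<rho>: "\<rho> \<noteq> {}" and closed: "mu_union_closed K gt (card \<rho>)"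
  shows "{a, b} \<in> K"
proof -
  note ord = hereditary_strict_total_order_on[OF h]
  have \<rho>K: "\<rho> \<in> K"
    by (rule simplicial_complex_downward_closed[OF sc \<sigma>(1)]) blast
  have "finite \<rho>"
    using simplicial_complex_finite_simplex[OF sc \<rho>K] .
  obtain c where c: "c \<in> \<rho>" "mu gt \<rho> = \<rho> - {c}"
    using mu_eq_Diff[OF sc ord \<rho>K \<rho>] .
  have "insert a (mu gt \<rho>) \<in> K" "insert b (mu gt \<rho>) \<in> K"
    unfolding c(2) using simplicial_complex_downward_closed[OF sc] \<sigma>(1) \<tau>(1)
    by (metis Diff_subset insert_mono)+
  moreover have "card (insert a (mu gt \<rho>)) = card \<rho>" "card (insert b (mu gt \<rho>)) = card \<rho>"
    unfolding c(2) using c(1) \<open>finite \<rho>\<close> \<sigma>(2) \<tau>(2) \<rho>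
    by (auto simp: card_Diff_singleton card_gt_0_iff)
  moreover have "mu gt (insert a (mu gt \<rho>)) = mu gt (insert b (mu gt \<rho>))"
    using mu_insert_mu[OF sc h \<sigma> \<rho>] mu_insert_mu[OF sc h \<tau> \<rho>] by simp
  ultimately have "insert a (mu gt \<rho>) \<union> insert b (mu gt \<rho>) \<in> K"
    using closed unfolding mu_union_closed_def by blast
  then show "{a, b} \<in> K"
    by (rule simplicial_complex_downward_closed[OF sc]) blast
qed

lemma mu_union_closed_Suc:
  assumes sc: "simplicial_complex K" and fl: "flag K" and h: "hereditary K gt"
    and n: "n > 0" and closed: "mu_union_closed K gt n"
  shows "mu_union_closed K gt (Suc n)"
  unfolding mu_union_closed_def
proof (intro ballI impI)
  note ord = hereditary_strict_total_order_on[OF h]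
  fix \<sigma> \<tau> assume \<sigma>K: "\<sigma> \<in> K" and \<tau>K: "\<tau> \<in> K"
    and card_mu: "card \<sigma> = Suc n \<and> card \<tau> = Suc n \<and> mu gt \<sigma> = mu gt \<tau>"
  then have "\<sigma> \<noteq> {}" "\<tau> \<noteq> {}"
    by auto
  obtain a where a: "a \<in> \<sigma>" "mu gt \<sigma> = \<sigma> - {a}"
    using mu_eq_Diff[OF sc ord \<sigma>K \<open>\<sigma> \<noteq> {}\<close>] .
  obtain b where b: "b \<in> \<tau>" "mu gt \<tau> = \<tau> - {b}"
    using mu_eq_Diff[OF sc ord \<tau>K \<open>\<tau> \<noteq> {}\<close>] .
  define \<rho> where "\<rho> = mu gt \<sigma>"
  have \<sigma>: "\<sigma> = insert a \<rho>" "a \<notin> \<rho>"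
    unfolding \<rho>_def a(2) using a(1) by auto
  have \<tau>: "\<tau> = insert b \<rho>" "b \<notin> \<rho>"
    unfolding \<rho>_def using card_mu b by auto
  have "mu gt \<sigma> = \<rho>" "mu gt \<tau> = \<rho>"
    unfolding \<rho>_def using card_mu by simp_all
  then have \<mu>: "mu gt (insert a \<rho>) = \<rho>" "mu gt (insert b \<rho>) = \<rho>"
    unfolding \<sigma>(1) \<tau>(1) .
  have K: "insert a \<rho> \<in> K" "insert b \<rho> \<in> K"
    using \<sigma>K \<tau>K unfolding \<sigma>(1) \<tau>(1) .
  have "finite \<rho>"
    using simplicial_complex_finite_simplex[OF sc \<sigma>K] unfolding \<sigma>(1) by simp
  then have "card \<rho> = n"
    using card_mu \<sigma> by simp
  then have "\<rho> \<noteq> {}"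
    using n by auto
  then have "{a, b} \<in> K"
    using edge_if_mu_union_closed[OF sc h K(1) \<sigma>(2) \<mu>(1) K(2) \<tau>(2) \<mu>(2)] closed \<open>card \<rho> = n\<close>
    by simp
  then show "\<sigma> \<union> \<tau> \<in> K"
    unfolding \<sigma>(1) \<tau>(1) using flag_union_insert[OF sc fl K] by blast
qed

lemma mu_union_closed_above:
  assumes "simplicial_complex K" "flag K" "hereditary K gt"
    and "mu_union_closed K gt (Suc r)" "Suc r \<le> n"
  shows "mu_union_closed K gt n"
  using assms(5)
proof (induction n rule: dec_induct)
  case base
  show ?case by (rule assms(4))
next
  case (step n)
  then show ?case
    by (intro mu_union_closed_Suc[OF assms(1-3)]) simp_all
qed

theorem lemma6:
  fixes K :: "'a set set" and gt :: "'a set \<Rightarrow> 'a set \<Rightarrow> bool" and r :: nat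
  assumes "simplicial_complex K"
    and "flag K"
    and "hereditary K gt"
    and "r > 0"
    and "\<forall>\<sigma>\<in>K. \<forall>\<tau>\<in>K. sdim \<sigma> = int r \<and> sdim \<tau> = int r \<and> mu gt \<sigma> = mu gt \<tau> \<longrightarrow> \<sigma> \<union> \<tau> \<in> K"
  shows "\<forall>\<sigma>\<in>K. \<forall>\<tau>\<in>K. sdim \<sigma> = sdim \<tau> \<and> sdim \<sigma> > int r \<and> mu gt \<sigma> = mu gt \<tau> \<longrightarrow> \<sigma> \<union> \<tau> \<in> K"
proof (intro ballI impI)
  fix \<sigma> \<tau> assume "\<sigma> \<in> K" "\<tau> \<in> K"
    and dims: "sdim \<sigma> = sdim \<tau> \<and> sdim \<sigma> > int r \<and> mu gt \<sigma> = mu gt \<tau>"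
  have "mu_union_closed K gt (Suc r)"
    using assms(5) unfolding mu_union_closed_def sdim_def by auto
  moreover have "card \<tau> = card \<sigma>" "Suc r \<le> card \<sigma>"
    using dims unfolding sdim_def by auto
  ultimately have "mu_union_closed K gt (card \<sigma>)"
    using mu_union_closed_above[OF assms(1-3)] by blast
  then show "\<sigma> \<union> \<tau> \<in> K"
    using \<open>\<sigma> \<in> K\<close> \<open>\<tau> \<in> K\<close> \<open>card \<tau> = card \<sigma>\<close> dims
    unfolding mu_union_closed_def by blast
qed

end
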